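(* Let $G$ be a reduced abelian group which is super directly finite and is not torsion-free. Then every $p$-primary component of $G$ (i.e., of its torsion subgroup) is finite.
   Context: All groups are abelian. A group $G$ is directly finite if there is no decomposition $G=A\oplus C$ with $C\ne0$ and $A\cong G$; $G$ is super directly finite if every epimorphic image of $G$ is directly finite. A group is reduced if it has no nonzero divisible subgroup. *)

theory Defs
  imports "HOL-Algebra.Algebra" "HOL-Computational_Algebra.Primes"
begin

text \<open>Abelian groups are modelled by HOL-Algebra's comm_group (written multiplicatively).\<close>

definition directly_finite :: "('a, 'b) monoid_scheme \<Rightarrow> bool" where
  "directly_finite G \<longleftrightarrow>
     \<not> (\<exists>A C. subgroup A G \<and> subgroup C G \<and> A \<inter> C = {\<one>\<^bsub>G\<^esub>} \<and>
              A <#>\<^bsub>G\<^esub> C = carrier G \<and> C \<noteq> {\<one>\<^bsub>G\<^esub>} \<and>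
              G\<lparr>carrier := A\<rparr> \<cong> G)"

text \<open>Super directly finite: every epimorphic image is directly finite. Epimorphic
  images of G are (up to isomorphism) exactly the quotients G/N.\<close>
definition super_directly_finite :: "('a, 'b) monoid_scheme \<Rightarrow> bool" where
  "super_directly_finite G \<longleftrightarrow> (\<forall>N. subgroup N G \<longrightarrow> directly_finite (G Mod N))"

definition divisible_subgroup :: "('a, 'b) monoid_scheme \<Rightarrow> 'a set \<Rightarrow> bool" where
  "divisible_subgroup G D \<longleftrightarrow>
     (\<forall>x\<in>D. \<forall>n::nat. n > 0 \<longrightarrow> (\<exists>y\<in>D. y [^]\<^bsub>G\<^esub> n = x))"

definition reduced :: "('a, 'b) monoid_scheme \<Rightarrow> bool" where
  "reduced G \<longleftrightarrow>
     (\<forall>D. subgroup D G \<and> divisible_subgroup G D \<longrightarrow> D = {\<one>\<^bsub>G\<^esub>})"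

definition torsion_free :: "('a, 'b) monoid_scheme \<Rightarrow> bool" where
  "torsion_free G \<longleftrightarrow>
     (\<forall>x\<in>carrier G. \<forall>n::nat. n > 0 \<and> x [^]\<^bsub>G\<^esub> n = \<one>\<^bsub>G\<^esub> \<longrightarrow> x = \<one>\<^bsub>G\<^esub>)"

definition primary_component :: "('a, 'b) monoid_scheme \<Rightarrow> nat \<Rightarrow> 'a set" where
  "primary_component G p =
     {x \<in> carrier G. \<exists>k::nat. x [^]\<^bsub>G\<^esub> (p ^ k) = \<one>\<^bsub>G\<^esub>}"

end

theory Submission
  imports Defs
begin

text \<open>
  If the p-primary component A of G is infinite, then the p-th powers have infinite index in G.
  Otherwise A = A^p R for a finite R \<subseteq> A, because A is closed under p-th roots in G. If p^m
  kills R, the subgroup A^{p^m} is p-divisible, hence divisible (being a p-group), hence trivial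
  because G is reduced; so A has exponent p^m, and being finitely generated modulo p-th powers
  it is finite.

  Infinite index of G^p gives an epimorphism from G onto W, the direct sum of countably many copies
  of \<int>/p: partial homomorphisms vanishing on G^p are extended one element at a time so as to hit
  every unit vector, and then to all of G by Zorn's lemma. But W is not directly finite, since
  the shift embeds W onto a proper direct summand. Hence the quotient of G by the kernel is an
  epimorphic image that is not directly finite.
\<close>

section \<open>Direct finiteness and split endomorphisms\<close>

lemma not_directly_finite_if_split_endomorphism:
  assumes H: "group H" and f: "f \<in> hom H H" and g: "g \<in> hom H H"
    and gf: "\<And>x. x \<in> carrier H \<Longrightarrow> g (f x) = x"
    and y: "y \<in> carrier H" "y \<notin> f ` carrier H"
  shows "\<not> directly_finite H"
proof -
  interpret H: group H by (rule H)
  interpret f: group_hom H H f by unfold_locales (rule f)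
  interpret g: group_hom H H g by unfold_locales (rule g)
  define A where "A = f ` carrier H"
  define C where "C = kernel H H g"
  have A: "subgroup A H" unfolding A_def by (rule f.img_is_subgroup)
  have C: "subgroup C H" unfolding C_def by (rule g.subgroup_kernel)
  have "A \<inter> C \<subseteq> {\<one>\<^bsub>H\<^esub>}"
    using gf by (auto simp: A_def C_def kernel_def)
  then have AC: "A \<inter> C = {\<one>\<^bsub>H\<^esub>}"
    using subgroup.one_closed[OF A] subgroup.one_closed[OF C] by blast
  have split: "f (g z) \<in> A" "inv\<^bsub>H\<^esub> f (g z) \<otimes>\<^bsub>H\<^esub> z \<in> C"
    "z = f (g z) \<otimes>\<^bsub>H\<^esub> (inv\<^bsub>H\<^esub> f (g z) \<otimes>\<^bsub>H\<^esub> z)" if z: "z \<in> carrier H" for z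
    using z gf by (simp_all add: A_def C_def kernel_def H.m_assoc[symmetric])
  have "A <#>\<^bsub>H\<^esub> C = carrier H"
  proof
    show "A <#>\<^bsub>H\<^esub> C \<subseteq> carrier H"
      using A C by (simp add: H.set_mult_closed subgroup.subset)
    show "carrier H \<subseteq> A <#>\<^bsub>H\<^esub> C"
      using split unfolding set_mult_def by blast
  qed
  moreover have "C \<noteq> {\<one>\<^bsub>H\<^esub>}"
  proof
    assume "C = {\<one>\<^bsub>H\<^esub>}"
    then have "y = f (g y)" using split[OF y(1)] y(1) by simp
    then show False using y by auto
  qed
  moreover have "g \<in> iso (H\<lparr>carrier := A\<rparr>) H"
  proof (rule isoI)
    show "g \<in> hom (H\<lparr>carrier := A\<rparr>) H"
      using subgroup.subset[OF A] by (intro homI) (auto intro!: g.hom_mult)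
    show "bij_betw g (carrier (H\<lparr>carrier := A\<rparr>)) (carrier H)"
      using gf by (auto simp: A_def bij_betw_def inj_on_def image_iff)
  qed
  ultimately show ?thesis
    using A C AC unfolding directly_finite_def is_iso_def by blast
qed

lemma not_directly_finite_if_iso_split_endomorphism:
  assumes H: "group H" and \<phi>: "\<phi> \<in> iso H W"
    and f: "f \<in> hom W W" and g: "g \<in> hom W W"
    and gf: "\<And>x. x \<in> carrier W \<Longrightarrow> g (f x) = x"
    and y: "y \<in> carrier W" "y \<notin> f ` carrier W"
  shows "\<not> directly_finite H"
proof -
  interpret H: group H by (rule H)
  define \<psi> where "\<psi> = inv_into (carrier H) \<phi>"
  have \<psi>: "\<psi> \<in> iso W H" unfolding \<psi>_def by (rule H.iso_set_sym[OF \<phi>])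
  have \<psi>\<phi>: "\<psi> (\<phi> x) = x" if "x \<in> carrier H" for x
    using \<phi> that unfolding \<psi>_def iso_def bij_betw_def by (auto intro: inv_into_f_f)
  have \<phi>\<psi>: "\<phi> (\<psi> w) = w" if "w \<in> carrier W" for w
    using \<phi> that unfolding \<psi>_def iso_def bij_betw_def by (auto intro: f_inv_into_f)
  have homs: "\<phi> \<in> hom H W" "\<psi> \<in> hom W H"
    using \<phi> \<psi> by (simp_all add: iso_imp_homomorphism)
  show ?thesis
  proof (rule not_directly_finite_if_split_endomorphism[OF H])
    show "\<psi> \<circ> f \<circ> \<phi> \<in> hom H H" "\<psi> \<circ> g \<circ> \<phi> \<in> hom H H"
      using homs f g by (auto intro!: hom_compose)
    show "(\<psi> \<circ> g \<circ> \<phi>) ((\<psi> \<circ> f \<circ> \<phi>) x) = x" if "x \<in> carrier H" for x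
      using that homs f \<phi>\<psi> \<psi>\<phi> gf by (simp add: hom_in_carrier)
    show "\<psi> y \<in> carrier H" using y homs by (simp add: hom_in_carrier)
    show "\<psi> y \<notin> (\<psi> \<circ> f \<circ> \<phi>) ` carrier H"
    proof
      assume "\<psi> y \<in> (\<psi> \<circ> f \<circ> \<phi>) ` carrier H"
      then obtain x where x: "x \<in> carrier H" "\<psi> y = \<psi> (f (\<phi> x))" by auto
      then have "y = f (\<phi> x)"
        using \<phi>\<psi>[OF y(1)] \<phi>\<psi>[of "f (\<phi> x)"] homs f by (metis hom_in_carrier)
      then show False using y x homs by (auto simp: hom_in_carrier)
    qed
  qed
qed

section \<open>The direct sum of countably many copies of \<int>/p\<close>

definition fin_seq_group :: "nat \<Rightarrow> (nat \<Rightarrow> int) monoid" where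
  "fin_seq_group p = sum_group UNIV (\<lambda>_. integer_mod_group p)"

lemma carrier_fin_seq_group:
  assumes "p > 0"
  shows "carrier (fin_seq_group p) = {x. (\<forall>i. 0 \<le> x i \<and> x i < int p) \<and> finite {i. x i \<noteq> 0}}"
  using assms by (auto simp: fin_seq_group_def carrier_sum_group carrier_integer_mod_group PiE_UNIV_domain)

lemma one_fin_seq_group [simp]: "\<one>\<^bsub>fin_seq_group p\<^esub> = (\<lambda>i. 0)"
  by (simp add: fin_seq_group_def restrict_UNIV)

lemma mult_fin_seq_group [simp]: "x \<otimes>\<^bsub>fin_seq_group p\<^esub> y = (\<lambda>i. (x i + y i) mod int p)"
  by (simp add: fin_seq_group_def restrict_UNIV)

lemma comm_group_fin_seq_group: "comm_group (fin_seq_group p)"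
proof (rule group.group_comm_groupI)
  show "group (fin_seq_group p)" by (simp add: fin_seq_group_def)
qed (simp add: add.commute)

lemma pow_fin_seq_group: "x [^]\<^bsub>fin_seq_group p\<^esub> (n::nat) = (\<lambda>i. (int n * x i) mod int p)"
proof (induction n)
  case (Suc n)
  then show ?case by (simp add: mod_add_right_eq algebra_simps)
qed simp

lemma fin_seq_group_exponent: "x [^]\<^bsub>fin_seq_group p\<^esub> p = \<one>\<^bsub>fin_seq_group p\<^esub>"
  by (simp add: pow_fin_seq_group)

lemma shift_hom_fin_seq_group:
  assumes "p > 0"
  shows "case_nat 0 \<in> hom (fin_seq_group p) (fin_seq_group p)"
proof (rule homI)
  fix x assume x: "x \<in> carrier (fin_seq_group p)"
  have "{i. case_nat 0 x i \<noteq> (0::int)} \<subseteq> Suc ` {i. x i \<noteq> 0}"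
    by (auto simp: image_iff gr0_conv_Suc split: nat.splits)
  then show "case_nat 0 x \<in> carrier (fin_seq_group p)"
    using x assms by (auto simp: carrier_fin_seq_group split: nat.splits intro: finite_subset)
qed (auto split: nat.splits)

lemma unshift_hom_fin_seq_group:
  assumes "p > 0"
  shows "(\<lambda>x. x \<circ> Suc) \<in> hom (fin_seq_group p) (fin_seq_group p)"
proof (rule homI)
  fix x assume x: "x \<in> carrier (fin_seq_group p)"
  have "finite (Suc -` {i. x i \<noteq> 0})"
    using x assms by (intro finite_vimageI) (simp_all add: carrier_fin_seq_group)
  then show "x \<circ> Suc \<in> carrier (fin_seq_group p)"
    using x assms by (auto simp: carrier_fin_seq_group vimage_def)
qed auto

lemma unit_seq_carrier:
  assumes "p > 1"
  shows "(\<lambda>i. of_bool (i = n)) \<in> carrier (fin_seq_group p)"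
proof -
  have "{i. of_bool (i = n) \<noteq> (0::int)} = {n}" by auto
  then show ?thesis using assms by (simp add: carrier_fin_seq_group)
qed

lemma fin_seq_group_iso_not_directly_finite:
  assumes "group H" "\<phi> \<in> iso H (fin_seq_group p)" "p > 1"
  shows "\<not> directly_finite H"
proof (rule not_directly_finite_if_iso_split_endomorphism[OF assms(1,2)])
  show "case_nat 0 \<in> hom (fin_seq_group p) (fin_seq_group p)"
    "(\<lambda>x. x \<circ> Suc) \<in> hom (fin_seq_group p) (fin_seq_group p)"
    using assms(3) by (simp_all add: shift_hom_fin_seq_group unshift_hom_fin_seq_group)
  show "(\<lambda>i. of_bool (i = 0)) \<in> carrier (fin_seq_group p)"
    using assms(3) by (rule unit_seq_carrier)
  show "(\<lambda>i. of_bool (i = 0)) \<notin> case_nat 0 ` carrier (fin_seq_group p)"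
  proof
    assume "(\<lambda>i. of_bool (i = 0)) \<in> case_nat 0 ` carrier (fin_seq_group p)"
    then obtain x where "(\<lambda>i. of_bool (i = 0)) = case_nat (0::int) x" by blast
    from fun_cong[OF this, of 0] show False by simp
  qed
qed (simp add: fun_eq_iff)

lemma subgroup_nat_pow_closed: "subgroup K G \<Longrightarrow> x \<in> K \<Longrightarrow> x [^]\<^bsub>G\<^esub> (n::nat) \<in> K"
  by (induction n) (auto intro: subgroup.one_closed subgroup.m_closed)

lemma fin_seq_group_generated_by_units:
  assumes p: "p > 0" and K: "subgroup K (fin_seq_group p)"
    and units: "\<And>n. (\<lambda>i. of_bool (i = n)) \<in> K"
  shows "carrier (fin_seq_group p) \<subseteq> K"
proof -
  have "x \<in> K" if "x \<in> carrier (fin_seq_group p)" "\<forall>i\<ge>N. x i = 0" for x N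
    using that
  proof (induction N arbitrary: x)
    case 0
    then have "x = \<one>\<^bsub>fin_seq_group p\<^esub>" by (auto simp: fun_eq_iff)
    then show ?case using subgroup.one_closed[OF K] by simp
  next
    case (Suc N)
    define k where "k = nat (x N)"
    have x: "\<forall>i. 0 \<le> x i \<and> x i < int p" "finite {i. x i \<noteq> 0}"
      using Suc.prems p by (simp_all add: carrier_fin_seq_group)
    have "{i. (x(N := 0)) i \<noteq> 0} \<subseteq> {i. x i \<noteq> 0}" by auto
    then have "finite {i. (x(N := 0)) i \<noteq> 0}"
      using x(2) by (rule finite_subset)
    then have "x(N := 0) \<in> carrier (fin_seq_group p)"
      using x(1) p by (simp add: carrier_fin_seq_group)
    moreover have "\<forall>i\<ge>N. (x(N := 0)) i = 0"
      using Suc.prems(2) by (metis Suc_leI fun_upd_apply le_neq_implies_less)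
    ultimately have "x(N := 0) \<in> K"
      by (rule Suc.IH)
    moreover have "(\<lambda>i. of_bool (i = N)) [^]\<^bsub>fin_seq_group p\<^esub> k \<in> K"
      using K units by (rule subgroup_nat_pow_closed)
    moreover have "x(N := 0) \<otimes>\<^bsub>fin_seq_group p\<^esub> (\<lambda>i. of_bool (i = N)) [^]\<^bsub>fin_seq_group p\<^esub> k = x"
      using x by (auto simp: pow_fin_seq_group k_def fun_eq_iff)
    ultimately show ?case
      using subgroup.m_closed[OF K] by metis
  qed
  moreover have "\<exists>N. \<forall>i\<ge>N. x i = 0" if "x \<in> carrier (fin_seq_group p)" for x
    using that p finite_nat_bounded[of "{i. x i \<noteq> 0}"]
    by (auto simp: carrier_fin_seq_group subset_eq) (meson leD lessThan_iff)
  ultimately show ?thesis by blast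
qed

section \<open>Primary components of reduced groups\<close>

lemma prime_power_times_coprime:
  assumes "Factorial_Ring.prime (p::nat)" "n > 0"
  obtains k q where "n = p ^ k * q" "coprime q p" "q > 0"
proof -
  have "\<not> is_unit p" using prime_gt_1_nat[OF assms(1)] by simp
  then obtain q where q: "n = p ^ multiplicity p n * q" "\<not> p dvd q"
    using multiplicity_decompose'[of n p] assms(2) by blast
  have "coprime q p" using q(2) assms(1) by (simp add: prime_imp_coprime coprime_commute)
  moreover have "q > 0" by (rule gr0I) (use q(1) assms(2) in simp)
  ultimately show ?thesis using that q(1) by blast
qed

definition pow_cosets :: "('a, 'b) monoid_scheme \<Rightarrow> nat \<Rightarrow> 'a set \<Rightarrow> 'a set" where
  "pow_cosets G p F = {z [^]\<^bsub>G\<^esub> p \<otimes>\<^bsub>G\<^esub> f | z f. z \<in> carrier G \<and> f \<in> F}"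

definition finite_index_pow :: "('a, 'b) monoid_scheme \<Rightarrow> nat \<Rightarrow> bool" where
  "finite_index_pow G p \<longleftrightarrow> (\<exists>F. finite F \<and> F \<subseteq> carrier G \<and> carrier G \<subseteq> pow_cosets G p F)"

context comm_group
begin

lemma subgroup_pow_image:
  assumes "subgroup A G"
  shows "subgroup ((\<lambda>a. a [^] (n::nat)) ` A) G"
proof (rule subgroupI)
  have A: "a \<in> carrier G" if "a \<in> A" for a
    using subgroup.mem_carrier[OF assms that] .
  show "(\<lambda>a. a [^] n) ` A \<subseteq> carrier G"
    using A by auto
  show "(\<lambda>a. a [^] n) ` A \<noteq> {}"
    using subgroup.one_closed[OF assms] by blast
  show "inv x \<in> (\<lambda>a. a [^] n) ` A" if x: "x \<in> (\<lambda>a. a [^] n) ` A" for x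
  proof -
    obtain a where a: "a \<in> A" "x = a [^] n" using x by blast
    then have "inv x = inv a [^] n" using A by (simp add: nat_pow_inv)
    then show ?thesis using a subgroup.m_inv_closed[OF assms] by blast
  qed
  show "x \<otimes> y \<in> (\<lambda>a. a [^] n) ` A" if xy: "x \<in> (\<lambda>a. a [^] n) ` A" "y \<in> (\<lambda>a. a [^] n) ` A" for x y
  proof -
    obtain a b where ab: "a \<in> A" "b \<in> A" "x = a [^] n" "y = b [^] n" using xy by blast
    then have "x \<otimes> y = (a \<otimes> b) [^] n" using A by (simp add: nat_pow_distrib)
    then show ?thesis using ab subgroup.m_closed[OF assms] by blast
  qed
qed

lemma pow_prime_power_eq_one_mono:
  assumes "x \<in> carrier G" "x [^] ((p::nat) ^ k) = \<one>" "k \<le> l"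
  shows "x [^] (p ^ l) = \<one>"
proof -
  obtain j where "l = k + j" using assms(3) le_Suc_ex by blast
  then show ?thesis using assms(1,2) by (simp add: nat_pow_pow[symmetric] power_add)
qed

lemma primary_component_subgroup: "subgroup (primary_component G p) G"
proof (rule subgroupI)
  show "primary_component G p \<subseteq> carrier G" "primary_component G p \<noteq> {}"
    by (auto simp: primary_component_def intro!: exI[of _ \<one>])
next
  fix a assume "a \<in> primary_component G p"
  then show "inv a \<in> primary_component G p"
    by (auto simp: primary_component_def nat_pow_inv)
next
  fix a b assume "a \<in> primary_component G p" "b \<in> primary_component G p"
  then obtain k l where a: "a \<in> carrier G" "a [^] (p ^ k) = \<one>"
    and b: "b \<in> carrier G" "b [^] (p ^ l) = \<one>"
    by (auto simp: primary_component_def)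
  have "(a \<otimes> b) [^] (p ^ (k + l)) = \<one>"
    using pow_prime_power_eq_one_mono[OF a] pow_prime_power_eq_one_mono[OF b] a b
    by (simp add: nat_pow_distrib)
  then show "a \<otimes> b \<in> primary_component G p"
    using a b by (auto simp: primary_component_def)
qed

lemma primary_component_root:
  assumes "b \<in> carrier G" "b [^] (p::nat) \<in> primary_component G p"
  shows "b \<in> primary_component G p"
proof -
  obtain k where "(b [^] p) [^] (p ^ k) = \<one>"
    using assms(2) by (auto simp: primary_component_def)
  then have "b [^] (p ^ Suc k) = \<one>"
    using assms(1) by (simp add: nat_pow_pow)
  then show ?thesis
    using assms(1) unfolding primary_component_def by blast
qed

lemma finite_primary_exponent:
  assumes "finite S" "S \<subseteq> primary_component G p"
  shows "\<exists>m. \<forall>r\<in>S. r [^] (p ^ m) = \<one>"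
  using assms
proof (induction S rule: finite_induct)
  case (insert r S)
  then obtain m where m: "\<forall>s\<in>S. s [^] (p ^ m) = \<one>" by auto
  obtain k where k: "r \<in> carrier G" "r [^] (p ^ k) = \<one>"
    using insert.prems by (auto simp: primary_component_def)
  have "s [^] (p ^ (m + k)) = \<one>" if "s \<in> insert r S" for s
    using that insert.prems m pow_prime_power_eq_one_mono[OF k]
      pow_prime_power_eq_one_mono[of s p m "m + k"]
    by (auto simp: primary_component_def)
  then show ?case by blast
qed simp

lemma primary_component_coprime_root:
  assumes x: "x \<in> primary_component G p" and q: "coprime q p" "q > 0"
  shows "\<exists>r::nat. (x [^] r) [^] q = x"
proof -
  obtain k where xk: "x \<in> carrier G" "x [^] (p ^ k) = \<one>"
    using x by (auto simp: primary_component_def)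
  have "gcd q (p ^ k) = 1" using q by simp
  then obtain r t where rt: "q * r = p ^ k * t + 1"
    using bezout_nat[of q "p ^ k"] q by auto
  have "(x [^] r) [^] q = x [^] (p ^ k * t + 1)"
    using xk rt by (simp add: nat_pow_pow mult.commute)
  also have "\<dots> = (x [^] (p ^ k)) [^] t \<otimes> x"
    using xk by (simp add: nat_pow_pow[symmetric] nat_pow_mult[symmetric])
  also have "\<dots> = x"
    using xk by simp
  finally show ?thesis by blast
qed

lemma divisible_if_p_divisible:
  assumes p: "Factorial_Ring.prime (p::nat)" and D: "subgroup D G" "D \<subseteq> primary_component G p"
    and root: "\<And>x. x \<in> D \<Longrightarrow> \<exists>y\<in>D. y [^] p = x"
  shows "divisible_subgroup G D"
  unfolding divisible_subgroup_def
proof (intro ballI allI impI)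
  fix x and n :: nat assume x: "x \<in> D" and n: "n > 0"
  have Dc: "y \<in> carrier G" if "y \<in> D" for y
    using subgroup.mem_carrier[OF D(1) that] .
  have p_roots: "\<exists>y\<in>D. y [^] (p ^ j) = x" if "x \<in> D" for x j
    using that
  proof (induction j arbitrary: x)
    case 0
    then have "x [^] (p ^ 0) = x" using Dc by simp
    then show ?case using 0 by blast
  next
    case (Suc j)
    then obtain u where u: "u \<in> D" "u [^] p = x" using root by blast
    then obtain y where y: "y \<in> D" "y [^] (p ^ j) = u" using Suc.IH by blast
    have "y [^] (p ^ Suc j) = (y [^] (p ^ j)) [^] p"
      using Dc[OF y(1)] by (simp add: nat_pow_pow mult.commute)
    then show ?case using u y by auto
  qed
  obtain k q where nq: "n = p ^ k * q" and q: "coprime q p" "q > 0"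
    using prime_power_times_coprime[OF p n] .
  obtain r :: nat where r: "(x [^] r) [^] q = x"
    using primary_component_coprime_root[OF _ q] x D(2) by blast
  obtain y where y: "y \<in> D" "y [^] (p ^ k) = x [^] r"
    using p_roots subgroup_nat_pow_closed[OF D(1) x] by blast
  have "y [^] n = (y [^] (p ^ k)) [^] q"
    using Dc[OF y(1)] nq(1) by (simp add: nat_pow_pow)
  also have "\<dots> = x"
    by (simp only: y(2) r)
  finally show "\<exists>y\<in>D. y [^] n = x"
    using y(1) by blast
qed

lemma primary_component_pow_cosets:
  assumes F: "finite F" "F \<subseteq> carrier G" and cover: "carrier G \<subseteq> pow_cosets G p F"
  shows "\<exists>R. finite R \<and> R \<subseteq> primary_component G p \<and>
    (\<forall>a\<in>primary_component G p. \<exists>b\<in>primary_component G p. \<exists>r\<in>R. a = b [^] p \<otimes> r)"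
proof -
  let ?A = "primary_component G p"
  have Ac: "a \<in> carrier G" if "a \<in> ?A" for a
    using that by (simp add: primary_component_def)
  define F0 where "F0 = {f \<in> F. \<exists>r\<in>?A. \<exists>z\<in>carrier G. r = z [^] p \<otimes> f}"
  have "\<forall>f\<in>F0. \<exists>r. r \<in> ?A \<and> (\<exists>z\<in>carrier G. r = z [^] p \<otimes> f)"
    unfolding F0_def by blast
  then obtain rep where rep: "\<And>f. f \<in> F0 \<Longrightarrow> rep f \<in> ?A \<and> (\<exists>z\<in>carrier G. rep f = z [^] p \<otimes> f)"
    by (rule bchoice[elim_format]) blast
  have "\<forall>a\<in>?A. \<exists>b\<in>?A. \<exists>r\<in>rep ` F0. a = b [^] p \<otimes> r"
  proof
    fix a assume a: "a \<in> ?A"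
    obtain z f where zf: "z \<in> carrier G" "f \<in> F" "a = z [^] p \<otimes> f"
      using cover Ac[OF a] by (auto simp: pow_cosets_def)
    then have f: "f \<in> F0" "f \<in> carrier G"
      using a F(2) unfolding F0_def by blast+
    obtain z' where z': "z' \<in> carrier G" "rep f = z' [^] p \<otimes> f" and rA: "rep f \<in> ?A"
      using rep[OF f(1)] by blast
    define b where "b = z \<otimes> inv z'"
    have b: "b \<in> carrier G" using zf z' by (simp add: b_def)
    \<comment> \<open>a and rep f lie in the same coset of the p-th powers\<close>
    have "b [^] p \<otimes> rep f = z [^] p \<otimes> (inv z' [^] p \<otimes> z' [^] p) \<otimes> f"
      using zf z' f by (simp add: b_def nat_pow_distrib m_ac)
    also have "inv z' [^] p \<otimes> z' [^] p = \<one>"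
      using z' by (simp add: nat_pow_inv)
    finally have eq: "a = b [^] p \<otimes> rep f"
      using zf z' f by simp
    then have "b [^] p = a \<otimes> inv (rep f)"
      using b Ac[OF rA] Ac[OF a] by (simp add: m_assoc)
    then have "b [^] p \<in> ?A"
      using a rA primary_component_subgroup by (simp add: subgroup.m_closed subgroup.m_inv_closed)
    then have "b \<in> ?A" using primary_component_root[OF b] by blast
    then show "\<exists>b\<in>?A. \<exists>r\<in>rep ` F0. a = b [^] p \<otimes> r" using eq f(1) by blast
  qed
  moreover have "finite (rep ` F0)" "rep ` F0 \<subseteq> ?A"
    using F(1) rep by (auto simp: F0_def)
  ultimately show ?thesis by blast
qed

lemma primary_component_bounded_exponent:
  assumes red: "reduced G" and p: "Factorial_Ring.prime p"
    and R: "finite R" "R \<subseteq> primary_component G p"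
    and gen: "\<forall>a\<in>primary_component G p. \<exists>b\<in>primary_component G p. \<exists>r\<in>R. a = b [^] p \<otimes> r"
  shows "\<exists>m. \<forall>a\<in>primary_component G p. a [^] (p ^ m) = \<one>"
proof -
  let ?A = "primary_component G p"
  have A: "subgroup ?A G" by (rule primary_component_subgroup)
  have Ac: "a \<in> carrier G" if "a \<in> ?A" for a
    using that by (simp add: primary_component_def)
  obtain m where m: "\<And>r. r \<in> R \<Longrightarrow> r [^] (p ^ m) = \<one>"
    using finite_primary_exponent[OF R] by blast
  define D where "D = (\<lambda>a. a [^] (p ^ m)) ` ?A"
  have D: "subgroup D G" "D \<subseteq> ?A"
    using subgroup_pow_image[OF A] subgroup_nat_pow_closed[OF A] by (auto simp: D_def)
  \<comment> \<open>the generators in R die in D, so D is p-divisible\<close>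
  have "\<exists>y\<in>D. y [^] p = x" if "x \<in> D" for x
  proof -
    obtain a where a: "a \<in> ?A" "x = a [^] (p ^ m)" using \<open>x \<in> D\<close> by (auto simp: D_def)
    obtain b r where br: "b \<in> ?A" "r \<in> R" "a = b [^] p \<otimes> r" using gen a(1) by blast
    have "x = (b [^] p) [^] (p ^ m) \<otimes> r [^] (p ^ m)"
      using a br Ac R(2) by (auto simp: nat_pow_distrib)
    also have "\<dots> = (b [^] (p ^ m)) [^] p"
      using m[OF br(2)] Ac[OF br(1)] by (simp add: nat_pow_pow mult.commute)
    finally show ?thesis using br(1) by (auto simp: D_def)
  qed
  then have "divisible_subgroup G D"
    using divisible_if_p_divisible[OF p D] by blast
  then have "D = {\<one>}" using red D(1) unfolding reduced_def by blast
  then show ?thesis by (auto simp: D_def)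
qed

lemma pow_cover_iterate:
  assumes S: "S \<subseteq> carrier G" and R: "finite R" "R \<subseteq> carrier G"
    and gen: "\<forall>a\<in>S. \<exists>b\<in>S. \<exists>r\<in>R. a = b [^] (p::nat) \<otimes> r"
  shows "\<exists>T. finite T \<and> T \<subseteq> carrier G \<and> (\<forall>a\<in>S. \<exists>b\<in>S. \<exists>t\<in>T. a = b [^] (p ^ j) \<otimes> t)"
proof (induction j)
  case 0
  have "\<forall>a\<in>S. \<exists>b\<in>S. \<exists>t\<in>{\<one>}. a = b [^] (p ^ 0) \<otimes> t"
    using S by force
  then show ?case by (intro exI[of _ "{\<one>}"] conjI) simp_all
next
  case (Suc j)
  then obtain T where T: "finite T" "T \<subseteq> carrier G" "\<forall>a\<in>S. \<exists>b\<in>S. \<exists>t\<in>T. a = b [^] (p ^ j) \<otimes> t"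
    by blast
  define T' where "T' = (\<lambda>(r, t). r [^] (p ^ j) \<otimes> t) ` (R \<times> T)"
  have "finite T'" "T' \<subseteq> carrier G" using R T(1,2) by (auto simp: T'_def)
  moreover have "\<forall>a\<in>S. \<exists>c\<in>S. \<exists>t'\<in>T'. a = c [^] (p ^ Suc j) \<otimes> t'"
  proof
    fix a assume a: "a \<in> S"
    obtain b t where bt: "b \<in> S" "t \<in> T" "a = b [^] (p ^ j) \<otimes> t" using T(3) a by blast
    obtain c r where cr: "c \<in> S" "r \<in> R" "b = c [^] p \<otimes> r" using gen bt(1) by blast
    have "c \<in> carrier G" "r \<in> carrier G" "t \<in> carrier G"
      using bt cr S R(2) T(2) by auto
    then have "a = c [^] (p ^ Suc j) \<otimes> (r [^] (p ^ j) \<otimes> t)"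
      using bt(3) cr(3) by (simp add: nat_pow_distrib nat_pow_pow m_assoc mult.commute)
    moreover have "r [^] (p ^ j) \<otimes> t \<in> T'" using bt(2) cr(2) by (force simp: T'_def)
    ultimately show "\<exists>c\<in>S. \<exists>t'\<in>T'. a = c [^] (p ^ Suc j) \<otimes> t'" using cr(1) by blast
  qed
  ultimately show ?case by (intro exI[of _ T'] conjI)
qed

lemma finite_if_bounded_exponent:
  assumes S: "S \<subseteq> carrier G" and R: "finite R" "R \<subseteq> carrier G"
    and gen: "\<forall>a\<in>S. \<exists>b\<in>S. \<exists>r\<in>R. a = b [^] (p::nat) \<otimes> r"
    and exp: "\<forall>a\<in>S. a [^] (p ^ m) = \<one>"
  shows "finite S"
proof -
  obtain T where T: "finite T" "T \<subseteq> carrier G" "\<forall>a\<in>S. \<exists>b\<in>S. \<exists>t\<in>T. a = b [^] (p ^ m) \<otimes> t"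
    using pow_cover_iterate[OF S R gen, of m] by (elim exE conjE)
  have "S \<subseteq> T"
  proof
    fix a assume "a \<in> S"
    then obtain b t where "b \<in> S" "t \<in> T" "a = b [^] (p ^ m) \<otimes> t" using T(3) by blast
    then show "a \<in> T" using exp T(2) by auto
  qed
  then show ?thesis using T(1) finite_subset by blast
qed

lemma infinite_primary_component_infinite_index_pow:
  assumes red: "reduced G" and p: "Factorial_Ring.prime p"
    and inf: "infinite (primary_component G p)"
  shows "\<not> finite_index_pow G p"
proof
  assume "finite_index_pow G p"
  then obtain F where F: "finite F" "F \<subseteq> carrier G" and cover: "carrier G \<subseteq> pow_cosets G p F"
    unfolding finite_index_pow_def by (elim exE conjE)
  obtain R where R: "finite R" "R \<subseteq> primary_component G p"
    and gen: "\<forall>a\<in>primary_component G p. \<exists>b\<in>primary_component G p. \<exists>r\<in>R. a = b [^] p \<otimes> r"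
    using primary_component_pow_cosets[OF F cover] by (elim exE conjE)
  obtain m where m: "\<forall>a\<in>primary_component G p. a [^] (p ^ m) = \<one>"
    using primary_component_bounded_exponent[OF red p R gen] by (elim exE)
  have "primary_component G p \<subseteq> carrier G" "R \<subseteq> carrier G"
    using R(2) by (auto simp: primary_component_def)
  then have "finite (primary_component G p)"
    using finite_if_bounded_exponent R(1) gen m by blast
  with inf show False by contradiction
qed

end

section \<open>Homomorphisms vanishing on p-th powers\<close>

lemma comm_group_DirProd:
  assumes "comm_group G" "comm_group W"
  shows "comm_group (G \<times>\<times> W)"
proof -
  interpret G: comm_group G by (rule assms(1))
  interpret W: comm_group W by (rule assms(2))
  show ?thesis
    by (rule group.group_comm_groupI)
      (auto simp: DirProd_group G.is_group W.is_group G.m_comm W.m_comm)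
qed

lemma int_pow_DirProd:
  assumes G: "group G" and W: "group W" and ab: "a \<in> carrier G" "b \<in> carrier W"
  shows "(a, b) [^]\<^bsub>G \<times>\<times> W\<^esub> (k::int) = (a [^]\<^bsub>G\<^esub> k, b [^]\<^bsub>W\<^esub> k)"
proof -
  have P: "group (G \<times>\<times> W)" using G W by (rule DirProd_group)
  have "fst \<in> hom (G \<times>\<times> W) G" "snd \<in> hom (G \<times>\<times> W) W"
    by (auto intro!: homI simp: mult_DirProd')
  then have "fst ((a, b) [^]\<^bsub>G \<times>\<times> W\<^esub> k) = a [^]\<^bsub>G\<^esub> k"
    "snd ((a, b) [^]\<^bsub>G \<times>\<times> W\<^esub> k) = b [^]\<^bsub>W\<^esub> k"
    using hom_int_pow[OF _ _ P] G W ab by fastforce+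
  then show ?thesis by (metis prod.collapse)
qed

text \<open>The graph of a homomorphism into W that is defined on a subgroup of G containing all
  p-th powers and kills them: a partial homomorphism from G/G^p to W.\<close>
definition partial_hom_mod_pow :: "('a, 'b) monoid_scheme \<Rightarrow> ('c, 'd) monoid_scheme \<Rightarrow> nat \<Rightarrow> ('a \<times> 'c) set \<Rightarrow> bool" where
  "partial_hom_mod_pow G W p R \<longleftrightarrow> subgroup R (G \<times>\<times> W) \<and> (\<forall>b. (\<one>\<^bsub>G\<^esub>, b) \<in> R \<longrightarrow> b = \<one>\<^bsub>W\<^esub>) \<and>
     (\<forall>z\<in>carrier G. (z [^]\<^bsub>G\<^esub> p, \<one>\<^bsub>W\<^esub>) \<in> R)"

definition adjoin_graph :: "('a, 'b) monoid_scheme \<Rightarrow> ('c, 'd) monoid_scheme \<Rightarrow> ('a \<times> 'c) set \<Rightarrow> 'a \<Rightarrow> 'c \<Rightarrow> ('a \<times> 'c) set" where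
  "adjoin_graph G W R y w = R <#>\<^bsub>G \<times>\<times> W\<^esub> generate (G \<times>\<times> W) {(y, w)}"

locale elementary_target = G: comm_group G + W: comm_group W
  for G :: "('a, 'b) monoid_scheme" and W :: "('c, 'd) monoid_scheme" +
  fixes p :: nat
  assumes prime: "Factorial_Ring.prime p"
    and W_exponent: "\<And>w. w \<in> carrier W \<Longrightarrow> w [^]\<^bsub>W\<^esub> p = \<one>\<^bsub>W\<^esub>"
begin

abbreviation partial_hom :: "('a \<times> 'c) set \<Rightarrow> bool" where
  "partial_hom \<equiv> partial_hom_mod_pow G W p"

lemma comm_group_GW: "comm_group (G \<times>\<times> W)"
  using comm_group_DirProd G.comm_group_axioms W.comm_group_axioms .

lemma partial_hom_carrier: "partial_hom R \<Longrightarrow> (a, b) \<in> R \<Longrightarrow> a \<in> carrier G \<and> b \<in> carrier W"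
  unfolding partial_hom_mod_pow_def using subgroup.subset by fastforce

lemma partial_hom_single_valued:
  assumes R: "partial_hom R" and ab: "(a, b) \<in> R" "(a, c) \<in> R"
  shows "b = c"
proof -
  have sub: "subgroup R (G \<times>\<times> W)" using R by (simp add: partial_hom_mod_pow_def)
  have a: "a \<in> carrier G" and bc: "b \<in> carrier W" "c \<in> carrier W"
    using partial_hom_carrier[OF R] ab by auto
  have "(a, b) \<otimes>\<^bsub>G \<times>\<times> W\<^esub> inv\<^bsub>G \<times>\<times> W\<^esub> (a, c) \<in> R"
    using ab sub by (simp add: subgroup.m_closed subgroup.m_inv_closed)
  then have "(\<one>\<^bsub>G\<^esub>, b \<otimes>\<^bsub>W\<^esub> inv\<^bsub>W\<^esub> c) \<in> R"
    using a bc by (simp add: inv_DirProd G.is_group W.is_group)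
  then have "b \<otimes>\<^bsub>W\<^esub> inv\<^bsub>W\<^esub> c = \<one>\<^bsub>W\<^esub>"
    using R by (simp add: partial_hom_mod_pow_def)
  then show ?thesis using bc by (simp add: W.inv_equality W.inv_solve_right')
qed

lemma partial_hom_int_pow:
  assumes R: "partial_hom R" and ab: "(a, b) \<in> R"
  shows "(a [^]\<^bsub>G\<^esub> (k::int), b [^]\<^bsub>W\<^esub> k) \<in> R"
proof -
  interpret P: comm_group "G \<times>\<times> W" by (rule comm_group_GW)
  have "(a, b) [^]\<^bsub>G \<times>\<times> W\<^esub> k \<in> R"
    using R ab by (simp add: partial_hom_mod_pow_def P.subgroup_int_pow_closed)
  then show ?thesis
    using partial_hom_carrier[OF R ab] by (simp add: int_pow_DirProd G.is_group W.is_group)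
qed

lemma partial_hom_pow_in_domain:
  assumes R: "partial_hom R" and y: "y \<in> carrier G" "y \<notin> Domain R"
    and k: "y [^]\<^bsub>G\<^esub> (k::int) \<in> Domain R"
  shows "int p dvd k"
proof (rule ccontr)
  assume "\<not> int p dvd k"
  moreover have "Factorial_Ring.prime (int p)" using prime by simp
  ultimately have "coprime (int p) k" by (simp add: prime_imp_coprime)
  then have "gcd k (int p) = 1" by (metis coprime_iff_gcd_eq_1 gcd.commute)
  then obtain u v where uv: "u * k + v * int p = 1"
    using bezout_int[of k "int p"] by auto
  obtain c where c: "(y [^]\<^bsub>G\<^esub> k, c) \<in> R" using k by blast
  have sub: "subgroup R (G \<times>\<times> W)" using R by (simp add: partial_hom_mod_pow_def)
  have yp: "(y [^]\<^bsub>G\<^esub> p, \<one>\<^bsub>W\<^esub>) \<in> R"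
    using R y(1) by (simp add: partial_hom_mod_pow_def)
  have "((y [^]\<^bsub>G\<^esub> k) [^]\<^bsub>G\<^esub> u, c [^]\<^bsub>W\<^esub> u) \<in> R"
    "((y [^]\<^bsub>G\<^esub> p) [^]\<^bsub>G\<^esub> v, \<one>\<^bsub>W\<^esub> [^]\<^bsub>W\<^esub> v) \<in> R"
    by (rule partial_hom_int_pow[OF R c], rule partial_hom_int_pow[OF R yp])
  then have "((y [^]\<^bsub>G\<^esub> k) [^]\<^bsub>G\<^esub> u \<otimes>\<^bsub>G\<^esub> (y [^]\<^bsub>G\<^esub> p) [^]\<^bsub>G\<^esub> v,
      c [^]\<^bsub>W\<^esub> u \<otimes>\<^bsub>W\<^esub> \<one>\<^bsub>W\<^esub> [^]\<^bsub>W\<^esub> v) \<in> R"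
    using subgroup.m_closed[OF sub] by fastforce
  moreover have "(y [^]\<^bsub>G\<^esub> k) [^]\<^bsub>G\<^esub> u \<otimes>\<^bsub>G\<^esub> (y [^]\<^bsub>G\<^esub> p) [^]\<^bsub>G\<^esub> v = y"
  proof -
    have "(y [^]\<^bsub>G\<^esub> p) [^]\<^bsub>G\<^esub> v = y [^]\<^bsub>G\<^esub> (v * int p)"
      using y(1) by (simp add: G.int_pow_pow int_pow_int[symmetric] mult.commute)
    moreover have "(y [^]\<^bsub>G\<^esub> k) [^]\<^bsub>G\<^esub> u = y [^]\<^bsub>G\<^esub> (u * k)"
      using y(1) by (simp add: G.int_pow_pow mult.commute)
    ultimately have "(y [^]\<^bsub>G\<^esub> k) [^]\<^bsub>G\<^esub> u \<otimes>\<^bsub>G\<^esub> (y [^]\<^bsub>G\<^esub> p) [^]\<^bsub>G\<^esub> v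
        = y [^]\<^bsub>G\<^esub> (u * k + v * int p)"
      using y(1) by (simp add: G.int_pow_mult)
    then show ?thesis using y(1) uv by simp
  qed
  ultimately show False using y(2) by (metis Domain.DomainI)
qed

lemma partial_hom_pow_multiple:
  assumes R: "partial_hom R" and y: "y \<in> carrier G" and k: "int p dvd k"
  shows "(y [^]\<^bsub>G\<^esub> k, \<one>\<^bsub>W\<^esub>) \<in> R"
proof -
  obtain t where t: "k = int p * t" using k by (elim dvdE)
  have "(y [^]\<^bsub>G\<^esub> p, \<one>\<^bsub>W\<^esub>) \<in> R"
    using R y by (simp add: partial_hom_mod_pow_def)
  moreover have "y [^]\<^bsub>G\<^esub> k = (y [^]\<^bsub>G\<^esub> p) [^]\<^bsub>G\<^esub> t"
    using y t by (simp add: G.int_pow_pow int_pow_int[symmetric])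
  ultimately show ?thesis
    using partial_hom_int_pow[OF R, of "y [^]\<^bsub>G\<^esub> p" "\<one>\<^bsub>W\<^esub>" t] by simp
qed

lemma W_int_pow_multiple:
  assumes w: "w \<in> carrier W" and k: "int p dvd k"
  shows "w [^]\<^bsub>W\<^esub> k = \<one>\<^bsub>W\<^esub>"
proof -
  obtain t where t: "k = int p * t" using k by (elim dvdE)
  have "w [^]\<^bsub>W\<^esub> k = (w [^]\<^bsub>W\<^esub> p) [^]\<^bsub>W\<^esub> t"
    using w t by (simp add: W.int_pow_pow int_pow_int[symmetric])
  then show ?thesis
    using W_exponent[OF w] by simp
qed

lemma adjoin_graph_iff:
  assumes R: "partial_hom R" and y: "y \<in> carrier G" and w: "w \<in> carrier W"
  shows "x \<in> adjoin_graph G W R y w \<longleftrightarrow>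
    (\<exists>a b k. (a, b) \<in> R \<and> x = (a \<otimes>\<^bsub>G\<^esub> y [^]\<^bsub>G\<^esub> (k::int), b \<otimes>\<^bsub>W\<^esub> w [^]\<^bsub>W\<^esub> k))"
proof -
  interpret P: comm_group "G \<times>\<times> W" by (rule comm_group_GW)
  have gen: "generate (G \<times>\<times> W) {(y, w)} = (\<lambda>k::int. (y [^]\<^bsub>G\<^esub> k, w [^]\<^bsub>W\<^esub> k)) ` UNIV"
    using P.generate_pow[of "(y, w)"] y w by (auto simp: int_pow_DirProd G.is_group W.is_group)
  show ?thesis
  proof
    assume "x \<in> adjoin_graph G W R y w"
    then obtain h and k :: int where "h \<in> R" "x = h \<otimes>\<^bsub>G \<times>\<times> W\<^esub> (y [^]\<^bsub>G\<^esub> k, w [^]\<^bsub>W\<^esub> k)"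
      unfolding adjoin_graph_def set_mult_def gen by blast
    then show "\<exists>a b k. (a, b) \<in> R \<and> x = (a \<otimes>\<^bsub>G\<^esub> y [^]\<^bsub>G\<^esub> (k::int), b \<otimes>\<^bsub>W\<^esub> w [^]\<^bsub>W\<^esub> k)"
      by (cases h) auto
  next
    assume "\<exists>a b k. (a, b) \<in> R \<and> x = (a \<otimes>\<^bsub>G\<^esub> y [^]\<^bsub>G\<^esub> (k::int), b \<otimes>\<^bsub>W\<^esub> w [^]\<^bsub>W\<^esub> k)"
    then obtain h and k :: int where "h \<in> R" "x = h \<otimes>\<^bsub>G \<times>\<times> W\<^esub> (y [^]\<^bsub>G\<^esub> k, w [^]\<^bsub>W\<^esub> k)"
      by auto
    then show "x \<in> adjoin_graph G W R y w"
      unfolding adjoin_graph_def set_mult_def gen by blast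
  qed
qed

lemma subset_adjoin_graph:
  assumes R: "partial_hom R" and y: "y \<in> carrier G" and w: "w \<in> carrier W"
  shows "R \<subseteq> adjoin_graph G W R y w" "(y, w) \<in> adjoin_graph G W R y w"
proof -
  have one: "(\<one>\<^bsub>G\<^esub>, \<one>\<^bsub>W\<^esub>) \<in> R"
    using R subgroup.one_closed by (fastforce simp: partial_hom_mod_pow_def)
  show "R \<subseteq> adjoin_graph G W R y w"
  proof
    fix x assume x: "x \<in> R"
    then obtain a b where ab: "x = (a, b)" "(a, b) \<in> R" by (cases x) auto
    then have "x = (a \<otimes>\<^bsub>G\<^esub> y [^]\<^bsub>G\<^esub> (0::int), b \<otimes>\<^bsub>W\<^esub> w [^]\<^bsub>W\<^esub> (0::int))"
      using partial_hom_carrier[OF R] by simp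
    then show "x \<in> adjoin_graph G W R y w"
      using ab(2) unfolding adjoin_graph_iff[OF R y w] by blast
  qed
  have "(y, w) = (\<one>\<^bsub>G\<^esub> \<otimes>\<^bsub>G\<^esub> y [^]\<^bsub>G\<^esub> (1::int), \<one>\<^bsub>W\<^esub> \<otimes>\<^bsub>W\<^esub> w [^]\<^bsub>W\<^esub> (1::int))"
    using y w by simp
  then show "(y, w) \<in> adjoin_graph G W R y w"
    using one unfolding adjoin_graph_iff[OF R y w] by blast
qed

lemma partial_hom_adjoin_graph:
  assumes R: "partial_hom R" and y: "y \<in> carrier G" "y \<notin> Domain R" and w: "w \<in> carrier W"
  shows "partial_hom (adjoin_graph G W R y w)"
  unfolding partial_hom_mod_pow_def
proof (intro conjI allI impI ballI)
  interpret P: comm_group "G \<times>\<times> W" by (rule comm_group_GW)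
  have sub: "subgroup R (G \<times>\<times> W)" using R by (simp add: partial_hom_mod_pow_def)
  show "subgroup (adjoin_graph G W R y w) (G \<times>\<times> W)"
    unfolding adjoin_graph_def using y(1) w
    by (intro P.mult_subgroups[OF sub] P.generate_is_subgroup) simp
  show "(z [^]\<^bsub>G\<^esub> p, \<one>\<^bsub>W\<^esub>) \<in> adjoin_graph G W R y w" if "z \<in> carrier G" for z
    using that R subset_adjoin_graph(1)[OF R y(1) w] by (auto simp: partial_hom_mod_pow_def)
  fix b' assume "(\<one>\<^bsub>G\<^esub>, b') \<in> adjoin_graph G W R y w"
  then obtain a b k where ab: "(a, b) \<in> R" "\<one>\<^bsub>G\<^esub> = a \<otimes>\<^bsub>G\<^esub> y [^]\<^bsub>G\<^esub> (k::int)"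
    "b' = b \<otimes>\<^bsub>W\<^esub> w [^]\<^bsub>W\<^esub> k"
    by (auto simp: adjoin_graph_iff[OF R y(1) w])
  have a: "a \<in> carrier G" and b: "b \<in> carrier W"
    using partial_hom_carrier[OF R ab(1)] by auto
  have yk: "y [^]\<^bsub>G\<^esub> k = inv\<^bsub>G\<^esub> a"
    using ab(2) a y(1) by (metis G.inv_equality G.int_pow_closed G.m_comm)
  have "(inv\<^bsub>G\<^esub> a, inv\<^bsub>W\<^esub> b) \<in> R"
    using subgroup.m_inv_closed[OF sub ab(1)] a b by (simp add: inv_DirProd G.is_group W.is_group)
  then have k: "int p dvd k"
    using partial_hom_pow_in_domain[OF R y] yk by (metis Domain.DomainI)
  then have "(\<one>\<^bsub>G\<^esub>, b \<otimes>\<^bsub>W\<^esub> \<one>\<^bsub>W\<^esub>) \<in> R"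
    using subgroup.m_closed[OF sub ab(1) partial_hom_pow_multiple[OF R y(1) k]] ab(2) by simp
  then have "b = \<one>\<^bsub>W\<^esub>"
    using R b by (simp add: partial_hom_mod_pow_def)
  then show "b' = \<one>\<^bsub>W\<^esub>"
    using ab(3) W_int_pow_multiple[OF w k] by simp
qed

lemma adjoin_graph_domain_pow_cosets:
  assumes R: "partial_hom R" and y: "y \<in> carrier G" and w: "w \<in> carrier W"
    and F: "F \<subseteq> carrier G" "Domain R \<subseteq> pow_cosets G p F"
  shows "Domain (adjoin_graph G W R y w) \<subseteq>
    pow_cosets G p ((\<lambda>(f, j). f \<otimes>\<^bsub>G\<^esub> y [^]\<^bsub>G\<^esub> (j::int)) ` (F \<times> {0..<int p}))"
proof
  fix x assume "x \<in> Domain (adjoin_graph G W R y w)"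
  then obtain a b k where ab: "(a, b) \<in> R" "x = a \<otimes>\<^bsub>G\<^esub> y [^]\<^bsub>G\<^esub> (k::int)"
    by (auto simp: adjoin_graph_iff[OF R y w])
  then have "a \<in> pow_cosets G p F" using F(2) by blast
  then obtain z f where zf: "z \<in> carrier G" "f \<in> F" "a = z [^]\<^bsub>G\<^esub> p \<otimes>\<^bsub>G\<^esub> f"
    by (auto simp: pow_cosets_def)
  have f: "f \<in> carrier G" using zf(2) F(1) by blast
  have "y [^]\<^bsub>G\<^esub> k = y [^]\<^bsub>G\<^esub> (k div int p * int p) \<otimes>\<^bsub>G\<^esub> y [^]\<^bsub>G\<^esub> (k mod int p)"
    using y by (simp add: G.int_pow_mult[symmetric])
  also have "\<dots> = (y [^]\<^bsub>G\<^esub> (k div int p)) [^]\<^bsub>G\<^esub> p \<otimes>\<^bsub>G\<^esub> y [^]\<^bsub>G\<^esub> (k mod int p)"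
    using y by (simp add: G.int_pow_pow int_pow_int[symmetric])
  finally have "x = (z \<otimes>\<^bsub>G\<^esub> y [^]\<^bsub>G\<^esub> (k div int p)) [^]\<^bsub>G\<^esub> p \<otimes>\<^bsub>G\<^esub> (f \<otimes>\<^bsub>G\<^esub> y [^]\<^bsub>G\<^esub> (k mod int p))"
    using ab(2) zf f y by (simp add: G.nat_pow_distrib G.m_ac)
  moreover have "k mod int p \<in> {0..<int p}"
    using prime_gt_0_nat[OF prime] by simp
  then have "f \<otimes>\<^bsub>G\<^esub> y [^]\<^bsub>G\<^esub> (k mod int p) \<in> (\<lambda>(f, j). f \<otimes>\<^bsub>G\<^esub> y [^]\<^bsub>G\<^esub> (j::int)) ` (F \<times> {0..<int p})"
    using zf(2) by (intro rev_image_eqI[of "(f, k mod int p)"]) auto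
  moreover have "z \<otimes>\<^bsub>G\<^esub> y [^]\<^bsub>G\<^esub> (k div int p) \<in> carrier G"
    using zf(1) y by simp
  ultimately show "x \<in> pow_cosets G p ((\<lambda>(f, j). f \<otimes>\<^bsub>G\<^esub> y [^]\<^bsub>G\<^esub> (j::int)) ` (F \<times> {0..<int p}))"
    unfolding pow_cosets_def by blast
qed

lemma partial_hom_Union_chain:
  assumes ne: "C \<noteq> {}" and hom: "\<And>R. R \<in> C \<Longrightarrow> partial_hom R"
    and chain: "\<And>R S. R \<in> C \<Longrightarrow> S \<in> C \<Longrightarrow> R \<subseteq> S \<or> S \<subseteq> R"
  shows "partial_hom (\<Union>C)"
  unfolding partial_hom_mod_pow_def
proof (intro conjI allI impI ballI)
  interpret P: comm_group "G \<times>\<times> W" by (rule comm_group_GW)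
  have sub: "\<And>R. R \<in> C \<Longrightarrow> subgroup R (G \<times>\<times> W)"
    using hom by (simp add: partial_hom_mod_pow_def)
  obtain R0 where R0: "R0 \<in> C" using ne by blast
  show "subgroup (\<Union>C) (G \<times>\<times> W)"
  proof (rule P.subgroupI)
    show "\<Union>C \<subseteq> carrier (G \<times>\<times> W)"
      using subgroup.subset[OF sub] by (intro Union_least)
    show "\<Union>C \<noteq> {}"
      using R0 subgroup.one_closed[OF sub[OF R0]] by blast
    show "inv\<^bsub>G \<times>\<times> W\<^esub> u \<in> \<Union>C" if u: "u \<in> \<Union>C" for u
    proof -
      obtain R where "R \<in> C" "u \<in> R" using u by blast
      then show ?thesis using subgroup.m_inv_closed[OF sub] by blast
    qed
    show "u \<otimes>\<^bsub>G \<times>\<times> W\<^esub> v \<in> \<Union>C" if uv: "u \<in> \<Union>C" "v \<in> \<Union>C" for u v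
    proof -
      obtain R S where RS: "R \<in> C" "S \<in> C" "u \<in> R" "v \<in> S" using uv by blast
      then consider "u \<in> S" | "v \<in> R" using chain[of R S] by blast
      then show ?thesis using RS subgroup.m_closed[OF sub] by cases blast+
    qed
  qed
  show "b = \<one>\<^bsub>W\<^esub>" if b: "(\<one>\<^bsub>G\<^esub>, b) \<in> \<Union>C" for b
  proof -
    obtain R where "R \<in> C" "(\<one>\<^bsub>G\<^esub>, b) \<in> R" using b by blast
    then show ?thesis using hom unfolding partial_hom_mod_pow_def by blast
  qed
  show "(z [^]\<^bsub>G\<^esub> p, \<one>\<^bsub>W\<^esub>) \<in> \<Union>C" if "z \<in> carrier G" for z
    using that R0 hom[OF R0] unfolding partial_hom_mod_pow_def by blast
qed

lemma partial_hom_extends_to_total: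
  assumes R0: "partial_hom R0"
  obtains M where "partial_hom M" "R0 \<subseteq> M" "Domain M = carrier G"
proof -
  define A where "A = {R. partial_hom R \<and> R0 \<subseteq> R}"
  have "\<exists>Q\<in>A. \<forall>S\<in>A. Q \<subseteq> S \<longrightarrow> S = Q"
  proof (rule subset_Zorn_nonempty)
    show "A \<noteq> {}" using R0 by (auto simp: A_def)
    show "\<Union>C \<in> A" if "C \<noteq> {}" "subset.chain A C" for C
      using that partial_hom_Union_chain[of C]
      by (auto simp: A_def subset_chain_def)
  qed
  then obtain M where M: "partial_hom M" "R0 \<subseteq> M"
    and max: "\<And>S. partial_hom S \<Longrightarrow> R0 \<subseteq> S \<Longrightarrow> M \<subseteq> S \<Longrightarrow> S = M"
    by (auto simp: A_def)
  have "carrier G \<subseteq> Domain M"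
  proof
    fix y assume y: "y \<in> carrier G"
    show "y \<in> Domain M"
    proof (rule ccontr)
      assume ny: "y \<notin> Domain M"
      \<comment> \<open>otherwise M could be extended by y \<mapsto> 1\<close>
      have "adjoin_graph G W M y \<one>\<^bsub>W\<^esub> = M"
        using max partial_hom_adjoin_graph[OF M(1) y ny] subset_adjoin_graph(1)[OF M(1) y] M(2)
        by (metis W.one_closed subset_trans)
      then show False
        using subset_adjoin_graph(2)[OF M(1) y W.one_closed] ny by blast
    qed
  qed
  moreover have "Domain M \<subseteq> carrier G"
    using partial_hom_carrier[OF M(1)] by blast
  ultimately show ?thesis using that M by blast
qed

lemma partial_hom_extends_to_hom:
  assumes R0: "partial_hom R0"
  obtains h where "h \<in> hom G W" "\<And>a b. (a, b) \<in> R0 \<Longrightarrow> h a = b"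
proof -
  obtain M where M: "partial_hom M" "R0 \<subseteq> M" "Domain M = carrier G"
    using partial_hom_extends_to_total[OF R0] by blast
  define h where "h x = (THE b. (x, b) \<in> M)" for x
  have h: "h a = b" if "(a, b) \<in> M" for a b
    unfolding h_def using that partial_hom_single_valued[OF M(1)] by blast
  have graph: "(x, h x) \<in> M" if "x \<in> carrier G" for x
    using that M(3) h by blast
  have sub: "subgroup M (G \<times>\<times> W)" using M(1) by (simp add: partial_hom_mod_pow_def)
  have "h \<in> hom G W"
  proof (rule homI)
    show "h x \<in> carrier W" if "x \<in> carrier G" for x
      using partial_hom_carrier[OF M(1) graph[OF that]] by blast
    show "h (x \<otimes>\<^bsub>G\<^esub> y) = h x \<otimes>\<^bsub>W\<^esub> h y" if "x \<in> carrier G" "y \<in> carrier G" for x y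
      using subgroup.m_closed[OF sub graph[OF that(1)] graph[OF that(2)]] h by simp
  qed
  then show ?thesis using that h M(2) by blast
qed

lemma partial_hom_pow_graph: "partial_hom ((\<lambda>z. (z [^]\<^bsub>G\<^esub> p, \<one>\<^bsub>W\<^esub>)) ` carrier G)"
  unfolding partial_hom_mod_pow_def
proof (intro conjI allI impI ballI)
  have "(\<lambda>z. (z [^]\<^bsub>G\<^esub> p, \<one>\<^bsub>W\<^esub>)) \<in> hom G (G \<times>\<times> W)"
    by (intro homI) (simp_all add: G.nat_pow_distrib)
  then interpret h: group_hom G "G \<times>\<times> W" "\<lambda>z. (z [^]\<^bsub>G\<^esub> p, \<one>\<^bsub>W\<^esub>)"
    by (simp add: group_hom_def group_hom_axioms_def DirProd_group G.is_group W.is_group)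
  show "subgroup ((\<lambda>z. (z [^]\<^bsub>G\<^esub> p, \<one>\<^bsub>W\<^esub>)) ` carrier G) (G \<times>\<times> W)"
    by (rule h.img_is_subgroup)
qed auto

lemma covered_partial_hom_extend:
  assumes index: "\<not> finite_index_pow G p"
    and R: "partial_hom R" and F: "finite F" "F \<subseteq> carrier G" "Domain R \<subseteq> pow_cosets G p F"
    and w: "w \<in> carrier W"
  shows "\<exists>R' F'. partial_hom R' \<and> finite F' \<and> F' \<subseteq> carrier G \<and> Domain R' \<subseteq> pow_cosets G p F' \<and>
    R \<subseteq> R' \<and> (\<exists>y. (y, w) \<in> R')"
proof -
  obtain y where y: "y \<in> carrier G" "y \<notin> pow_cosets G p F"
    using index F(1,2) unfolding finite_index_pow_def by blast
  then have "y \<notin> Domain R" using F(3) by blast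
  define F' where "F' = (\<lambda>(f, j). f \<otimes>\<^bsub>G\<^esub> y [^]\<^bsub>G\<^esub> (j::int)) ` (F \<times> {0..<int p})"
  have "finite F'" "F' \<subseteq> carrier G"
    using F(1,2) y(1) by (auto simp: F'_def)
  then show ?thesis
    using partial_hom_adjoin_graph[OF R y(1) \<open>y \<notin> Domain R\<close> w] subset_adjoin_graph[OF R y(1) w]
      adjoin_graph_domain_pow_cosets[OF R y(1) w F(2,3)]
    unfolding F'_def[symmetric] by blast
qed

lemma partial_hom_chain_hitting:
  fixes e :: "nat \<Rightarrow> 'c"
  assumes index: "\<not> finite_index_pow G p"
    and e: "\<forall>n. e n \<in> carrier W"
  shows "\<exists>Rs. \<forall>n. partial_hom (Rs n) \<and> Rs n \<subseteq> Rs (Suc n) \<and> (\<exists>y. (y, e n) \<in> Rs (Suc n))"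
proof -
  define good where "good R \<longleftrightarrow> partial_hom R \<and>
    (\<exists>F. finite F \<and> F \<subseteq> carrier G \<and> Domain R \<subseteq> pow_cosets G p F)" for R
  define next_graph where "next_graph n R = (SOME R'. good R' \<and> R \<subseteq> R' \<and> (\<exists>y. (y, e n) \<in> R'))" for n R
  define Rs where "Rs = rec_nat ((\<lambda>z. (z [^]\<^bsub>G\<^esub> p, \<one>\<^bsub>W\<^esub>)) ` carrier G) next_graph"
  have step: "good (next_graph n R) \<and> R \<subseteq> next_graph n R \<and> (\<exists>y. (y, e n) \<in> next_graph n R)"
    if R: "good R" for n R
  proof -
    obtain F where F: "partial_hom R" "finite F" "F \<subseteq> carrier G" "Domain R \<subseteq> pow_cosets G p F"
      using R by (auto simp: good_def)
    obtain R' F' y where "partial_hom R'" "finite F'" "F' \<subseteq> carrier G" "Domain R' \<subseteq> pow_cosets G p F'"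
      "R \<subseteq> R'" "(y, e n) \<in> R'"
      using covered_partial_hom_extend[OF index F] e by blast
    then have "\<exists>R'. good R' \<and> R \<subseteq> R' \<and> (\<exists>y. (y, e n) \<in> R')"
      unfolding good_def by blast
    then show ?thesis
      unfolding next_graph_def by (rule someI_ex)
  qed
  have Rs_Suc: "Rs (Suc n) = next_graph n (Rs n)" for n
    by (simp add: Rs_def)
  have "Domain ((\<lambda>z. (z [^]\<^bsub>G\<^esub> p, \<one>\<^bsub>W\<^esub>)) ` carrier G) \<subseteq> pow_cosets G p {\<one>\<^bsub>G\<^esub>}"
    by (force simp: pow_cosets_def)
  then have "good (Rs 0)"
    using partial_hom_pow_graph by (auto simp: good_def Rs_def)
  then have good: "good (Rs n)" for n
    by (induction n) (simp_all add: Rs_Suc step)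
  then show ?thesis
    using step by (intro exI[of _ Rs]) (simp add: Rs_Suc good_def)
qed

lemma hom_hitting_sequence:
  fixes e :: "nat \<Rightarrow> 'c"
  assumes index: "\<not> finite_index_pow G p"
    and e: "\<forall>n. e n \<in> carrier W"
  shows "\<exists>h\<in>hom G W. \<forall>n. e n \<in> h ` carrier G"
proof -
  obtain Rs where "\<forall>n. partial_hom (Rs n) \<and> Rs n \<subseteq> Rs (Suc n) \<and> (\<exists>y. (y, e n) \<in> Rs (Suc n))"
    using partial_hom_chain_hitting[OF index e] by (elim exE)
  then have Rs: "\<And>n. partial_hom (Rs n)" "\<And>n. Rs n \<subseteq> Rs (Suc n)"
    and hit: "\<And>n. \<exists>y. (y, e n) \<in> Rs (Suc n)"
    by simp_all
  have "partial_hom (\<Union>(range Rs))"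
  proof (rule partial_hom_Union_chain)
    show "R \<subseteq> S \<or> S \<subseteq> R" if "R \<in> range Rs" "S \<in> range Rs" for R S
      using that lift_Suc_mono_le[of Rs, OF Rs(2)] nat_le_linear by (metis rangeE)
  qed (use Rs(1) in auto)
  then obtain h where h: "h \<in> hom G W" "\<And>a b. (a, b) \<in> \<Union>(range Rs) \<Longrightarrow> h a = b"
    using partial_hom_extends_to_hom by blast
  have "e n \<in> h ` carrier G" for n
  proof -
    obtain y where y: "(y, e n) \<in> Rs (Suc n)" using hit by blast
    then have "y \<in> carrier G" using partial_hom_carrier Rs(1) by blast
    moreover have "h y = e n" using h(2) y by blast
    ultimately show ?thesis by (metis rev_image_eqI)
  qed
  then show ?thesis using h(1) by blast
qed

end

lemma elementary_target_fin_seq_group: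
  assumes "comm_group G" "Factorial_Ring.prime p"
  shows "elementary_target G (fin_seq_group p) p"
proof (rule elementary_target.intro)
  show "elementary_target_axioms (fin_seq_group p) p"
    by (rule elementary_target_axioms.intro) (simp_all add: assms(2) fin_seq_group_exponent)
qed (simp_all add: assms(1) comm_group_fin_seq_group)

section \<open>Epimorphisms onto the direct sum\<close>

lemma surjective_hom_onto_fin_seq_group:
  assumes G: "comm_group G" and p: "Factorial_Ring.prime p" and index: "\<not> finite_index_pow G p"
  shows "\<exists>h\<in>hom G (fin_seq_group p). h ` carrier G = carrier (fin_seq_group p)"
proof -
  interpret T: elementary_target G "fin_seq_group p" p
    using G p by (rule elementary_target_fin_seq_group)
  have p1: "p > 1" using prime_gt_1_nat[OF p] .
  then have p0: "p > 0" by simp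
  have "\<forall>n. (\<lambda>i. of_bool (i = n)) \<in> carrier (fin_seq_group p)"
    using unit_seq_carrier[OF p1] by blast
  then have "\<exists>h\<in>hom G (fin_seq_group p). \<forall>n. (\<lambda>i. of_bool (i = n)) \<in> h ` carrier G"
    by (rule T.hom_hitting_sequence[OF index])
  then obtain h where h: "h \<in> hom G (fin_seq_group p)" "\<forall>n. (\<lambda>i. of_bool (i = n)) \<in> h ` carrier G"
    by (elim bexE)
  interpret h: group_hom G "fin_seq_group p" h
    using h(1) by (simp add: group_hom_def group_hom_axioms_def T.G.is_group T.W.is_group)
  have "h ` carrier G = carrier (fin_seq_group p)"
    using fin_seq_group_generated_by_units[OF p0 h.img_is_subgroup h(2)[rule_format]] h.hom_closed
    by blast
  then show ?thesis using h(1) by blast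
qed

lemma not_super_directly_finite_if_onto_fin_seq_group:
  assumes G: "group G" and h: "h \<in> hom G (fin_seq_group p)"
    and onto: "h ` carrier G = carrier (fin_seq_group p)" and p: "p > 1"
  shows "\<not> super_directly_finite G"
proof -
  interpret W: comm_group "fin_seq_group p" by (rule comm_group_fin_seq_group)
  interpret h: group_hom G "fin_seq_group p" h
    using G h W.is_group by (simp add: group_hom_def group_hom_axioms_def)
  have "G Mod kernel G (fin_seq_group p) h \<cong> fin_seq_group p"
    using onto by (rule h.FactGroup_iso)
  moreover have "group (G Mod kernel G (fin_seq_group p) h)"
    using h.normal_kernel by (rule normal.factorgroup_is_group)
  ultimately have "\<not> directly_finite (G Mod kernel G (fin_seq_group p) h)"
    using fin_seq_group_iso_not_directly_finite p unfolding is_iso_def by blast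
  then show ?thesis
    using h.subgroup_kernel unfolding super_directly_finite_def by blast
qed

theorem proposition5p4:
  fixes G :: "('a, 'b) monoid_scheme"
  assumes "comm_group G"
    and "reduced G"
    and "super_directly_finite G"
    and "\<not> torsion_free G"
  shows "\<forall>p::nat. Factorial_Ring.prime p \<longrightarrow> finite (primary_component G p)"
proof (intro allI impI)
  fix p :: nat assume p: "Factorial_Ring.prime p"
  interpret G: comm_group G by (rule assms(1))
  show "finite (primary_component G p)"
  proof (rule ccontr)
    assume "infinite (primary_component G p)"
    then have "\<not> finite_index_pow G p"
      by (rule G.infinite_primary_component_infinite_index_pow[OF assms(2) p])
    then have "\<exists>h\<in>hom G (fin_seq_group p). h ` carrier G = carrier (fin_seq_group p)"
      by (rule surjective_hom_onto_fin_seq_group[OF assms(1) p])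
    then obtain h where "h \<in> hom G (fin_seq_group p)" "h ` carrier G = carrier (fin_seq_group p)"
      by (elim bexE)
    then show False
      using not_super_directly_finite_if_onto_fin_seq_group[OF G.is_group] prime_gt_1_nat[OF p] assms(3)
      by blast
  qed
qed

end
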